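(* Let $a>0$, $c>0$, and let $y$ be the solution of $\dot y(t)=\frac{c}{y(t)}-1$ with $y(0)=a$. Then for every $t\ge0$ with $t\ge a+c\log(a/c)$ we have $y(t)\le2c$. *)

theory Defs
  imports Complex_Main
begin

end

theory Submission
  imports Defs "HOL-Analysis.Analysis"
begin

text \<open>Above the equilibrium \<open>c\<close> the solution decreases, so once it is at most \<open>2c\<close> it stays
  there. While it is above \<open>2c\<close>, the quantity \<open>y + c ln (y - c) + t\<close> is a first integral of
  the equation; comparing its value at time \<open>0\<close> and at time \<open>t\<close> bounds the time the solution
  can spend above \<open>2c\<close> by \<open>a + c ln (a / c)\<close>.\<close>

lemma below_level_if_decreasing_above:
  fixes y y' :: "real \<Rightarrow> real"
  assumes "s \<le> t" and cont: "continuous_on {s..t} y"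
    and deriv: "\<And>u. s < u \<Longrightarrow> u < t \<Longrightarrow> (y has_real_derivative y' u) (at u)"
    and decr: "\<And>u. s < u \<Longrightarrow> u < t \<Longrightarrow> y u > M \<Longrightarrow> y' u < 0"
    and "y s \<le> M"
  shows "y t \<le> M"
proof (rule ccontr)
  assume above: "\<not> y t \<le> M"
  define S where "S = {u \<in> {s..t}. y u \<le> M}"
  have "S = {s..t} \<inter> y -` {..M}"
    unfolding S_def by auto
  then have "closed S"
    using continuous_closed_preimage[OF cont] by auto
  moreover have "bounded S"
    by (rule bounded_subset[OF bounded_closed_interval]) (auto simp: S_def)
  moreover have "S \<noteq> {}"
    using assms by (auto simp: S_def)
  ultimately have "Sup S \<in> S" and upper: "\<And>u. u \<in> S \<Longrightarrow> u \<le> Sup S"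
    by (auto intro: closed_contains_Sup cSup_upper bounded_imp_bdd_above)
  define u0 where "u0 = Sup S"
  have u0: "s \<le> u0" "u0 < t" "y u0 \<le> M"
    using \<open>Sup S \<in> S\<close> above unfolding S_def u0_def by (auto simp: order.order_iff_strict)
  have "continuous_on {u0..t} y"
    using cont u0 by (auto intro: continuous_on_subset)
  moreover have "y differentiable (at u)" if "u0 < u" "u < t" for u
    using deriv[of u] that u0 unfolding real_differentiable_def by auto
  ultimately obtain z l where z: "u0 < z" "z < t" "(y has_real_derivative l) (at z)"
      and mvt: "y t - y u0 = (t - u0) * l"
    using MVT[OF \<open>u0 < t\<close>] by blast
  have "y z > M"
    using upper[of z] z u0 unfolding S_def u0_def by force
  then have "l < 0"
    using decr[of z] DERIV_unique[OF z(3) deriv[of z]] z u0 by auto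
  then have "(t - u0) * l < 0"
    using \<open>u0 < t\<close> by (simp add: mult_pos_neg)
  then have "y t < y u0"
    using mvt by linarith
  with u0 above show False by auto
qed

lemma first_integral_const:
  fixes y :: "real \<Rightarrow> real" and c s t :: real
  assumes "c > 0" "s < t" and cont: "continuous_on {s..t} y"
    and above: "\<And>u. s \<le> u \<Longrightarrow> u \<le> t \<Longrightarrow> y u > c"
    and deriv: "\<And>u. s < u \<Longrightarrow> u < t \<Longrightarrow> (y has_real_derivative (c / y u - 1)) (at u)"
  shows "y t + c * ln (y t - c) + t = y s + c * ln (y s - c) + s"
proof -
  define V where "V u = y u + c * ln (y u - c) + u" for u
  have "V t = V s"
  proof (rule DERIV_isconst_end[OF \<open>s < t\<close>])
    show "continuous_on {s..t} V"
    proof -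
      have "\<forall>u\<in>{s..t}. y u - c \<noteq> 0"
        using above by force
      then show ?thesis
        unfolding V_def by (intro continuous_intros cont) auto
    qed
  next
    fix u assume u: "s < u" "u < t"
    have "y u > c" "y u > 0"
      using above[of u] u \<open>c > 0\<close> by auto
    have ln_deriv: "((\<lambda>u. ln (y u - c)) has_real_derivative 1 / (y u - c) * (c / y u - 1)) (at u)"
      using DERIV_chain2[OF DERIV_ln_divide DERIV_diff[OF deriv[OF u] DERIV_const]] \<open>y u > c\<close>
      by simp
    have "(V has_real_derivative
        (c / y u - 1) + c * (1 / (y u - c) * (c / y u - 1)) + 1) (at u)"
      unfolding V_def
      by (rule DERIV_add[OF DERIV_add[OF deriv[OF u] DERIV_cmult[OF ln_deriv]] DERIV_ident])
    moreover have "(c / y u - 1) + c * (1 / (y u - c) * (c / y u - 1)) + 1 = 0"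
      using \<open>y u > c\<close> \<open>y u > 0\<close> by (simp add: field_simps)
    ultimately show "(V has_real_derivative 0) (at u)"
      by simp
  qed
  then show ?thesis
    unfolding V_def .
qed

theorem lemma15:
  fixes a c :: real and y :: "real \<Rightarrow> real"
  assumes "a > 0" and "c > 0"
    and "y 0 = a"
    and "\<And>t. t \<ge> 0 \<Longrightarrow> y t \<noteq> 0"
    and "\<And>t. t \<ge> 0 \<Longrightarrow> (y has_real_derivative (c / y t - 1)) (at t within {0..})"
  shows "\<forall>t. t \<ge> 0 \<and> t \<ge> a + c * ln (a / c) \<longrightarrow> y t \<le> 2 * c"
proof (intro allI impI)
  fix t assume t: "t \<ge> 0 \<and> t \<ge> a + c * ln (a / c)"
  have deriv: "(y has_real_derivative (c / y u - 1)) (at u)" if "u > 0" for u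
    using assms(5)[of u] that at_within_interior[of u "{0..}"] by simp
  have cont: "continuous_on {s..t} y" if "s \<ge> 0" for s
    using DERIV_continuous_on[of "{0..}" y, OF assms(5)] that
    by (auto intro: continuous_on_subset)
  show "y t \<le> 2 * c"
  proof (cases "\<exists>s. 0 \<le> s \<and> s \<le> t \<and> y s \<le> 2 * c")
    case True
    then obtain s where s: "0 \<le> s" "s \<le> t" "y s \<le> 2 * c"
      by blast
    show ?thesis
      using \<open>c > 0\<close> s
      by (intro below_level_if_decreasing_above[OF \<open>s \<le> t\<close> cont deriv]) auto
  next
    case False
    then have big: "\<And>s. 0 \<le> s \<Longrightarrow> s \<le> t \<Longrightarrow> y s > 2 * c"
      by force
    have "a > 2 * c"
      using big[of 0] t assms(3) by auto
    then have "c * ln (a / c) > 0"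
      using \<open>c > 0\<close> by simp
    then have "t > 0"
      using t \<open>a > 0\<close> by linarith
    have "y t + c * ln (y t - c) + t = a + c * ln (a - c)"
      using first_integral_const[OF \<open>c > 0\<close> \<open>t > 0\<close>, of y] cont[of 0] deriv big \<open>c > 0\<close> assms(3)
      by force
    moreover have "c * ln (y t - c) > c * ln c" "c * ln (a - c) < c * ln a"
      using big[of t] t \<open>a > 2 * c\<close> \<open>c > 0\<close> by auto
    moreover have "c * ln (a / c) = c * ln a - c * ln c"
      using assms by (simp add: ln_div right_diff_distrib)
    ultimately have "t < a + c * ln (a / c)"
      using big[of t] t \<open>c > 0\<close> by linarith
    with t show ?thesis by simp
  qed
qed

end
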